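(* Let $G=(V,E)$ be a graph with infinite edge motion and let $\gamma \in \operatorname{Aut} G$. Let $V_{\text{move}} = \{v \in V : \gamma(v) \neq v\}$, and let $C$ be the vertex set of a connected component of the induced subgraph $G[V_{\text{move}}]$. If $C$ is finite, then $C$ contains a vertex of infinite degree in $G$.
   Context: Graphs are simple and may be infinite. An automorphism $\gamma$ acts on edges by $\gamma(uv)=\gamma(u)\gamma(v)$; it moves an edge $e$ if $\gamma(e)\neq e$ as an unordered pair. A graph has infinite edge motion if every non-trivial automorphism moves infinitely many edges. *)

theory Defs
  imports Main
begin

definition simple_graph :: "'a set \<Rightarrow> 'a set set \<Rightarrow> bool" where
  "simple_graph V E \<longleftrightarrow> (\<forall>e\<in>E. e \<subseteq> V \<and> card e = 2)"

definition graph_aut :: "'a set \<Rightarrow> 'a set set \<Rightarrow> ('a \<Rightarrow> 'a) \<Rightarrow> bool" where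
  "graph_aut V E g \<longleftrightarrow> bij_betw g V V \<and>
     (\<forall>u\<in>V. \<forall>v\<in>V. {u, v} \<in> E \<longleftrightarrow> {g u, g v} \<in> E)"

definition moved_edges :: "'a set set \<Rightarrow> ('a \<Rightarrow> 'a) \<Rightarrow> 'a set set" where
  "moved_edges E g = {e \<in> E. g ` e \<noteq> e}"

definition infinite_edge_motion :: "'a set \<Rightarrow> 'a set set \<Rightarrow> bool" where
  "infinite_edge_motion V E \<longleftrightarrow>
     (\<forall>g. graph_aut V E g \<and> (\<exists>v\<in>V. g v \<noteq> v) \<longrightarrow> infinite (moved_edges E g))"

definition induced_adj :: "'a set set \<Rightarrow> 'a set \<Rightarrow> 'a \<Rightarrow> 'a \<Rightarrow> bool" where
  "induced_adj E S x y \<longleftrightarrow> x \<in> S \<and> y \<in> S \<and> {x, y} \<in> E"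

definition is_component :: "'a set set \<Rightarrow> 'a set \<Rightarrow> 'a set \<Rightarrow> bool" where
  "is_component E S C \<longleftrightarrow> (\<exists>u\<in>S. C = {w. (induced_adj E S)\<^sup>*\<^sup>* u w})"

definition degree_set :: "'a set \<Rightarrow> 'a set set \<Rightarrow> 'a \<Rightarrow> 'a set" where
  "degree_set V E v = {w \<in> V. {v, w} \<in> E}"

end

theory Submission
  imports Defs
begin

text \<open>
  Suppose every vertex of the finite component \<open>C\<close> has finite degree. Every neighbour of \<open>C\<close>
  outside \<open>C\<close> is fixed by \<open>\<gamma>\<close>, and \<open>\<gamma>(C)\<close> is again a component, so it equals \<open>C\<close> or is
  disjoint from it. Hence the map acting as \<open>\<gamma>\<close> on \<open>C\<close>, as \<open>\<gamma>\<^sup>-\<^sup>1\<close> on \<open>\<gamma>(C)\<close> and as the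
  identity elsewhere is a non-trivial automorphism. It only moves edges at the finitely many
  vertices of \<open>C \<union> \<gamma>(C)\<close>, each of finite degree, contradicting infinite edge motion.
\<close>

lemma graph_aut_in_V: "graph_aut V E g \<Longrightarrow> x \<in> V \<Longrightarrow> g x \<in> V"
  unfolding graph_aut_def by (auto dest: bij_betwE)

lemma graph_aut_adj:
  "graph_aut V E g \<Longrightarrow> u \<in> V \<Longrightarrow> v \<in> V \<Longrightarrow> {g u, g v} \<in> E \<longleftrightarrow> {u, v} \<in> E"
  unfolding graph_aut_def by blast

lemma infinite_edge_motionD:
  "infinite_edge_motion V E \<Longrightarrow> graph_aut V E f \<Longrightarrow> v \<in> V \<Longrightarrow> f v \<noteq> v
    \<Longrightarrow> infinite (moved_edges E f)"
  unfolding infinite_edge_motion_def by blast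

lemma graph_aut_inv_into:
  assumes "graph_aut V E g"
  shows "graph_aut V E (inv_into V g)"
proof -
  have bij: "bij_betw g V V" and adj: "\<And>u v. u \<in> V \<Longrightarrow> v \<in> V \<Longrightarrow> {u, v} \<in> E \<longleftrightarrow> {g u, g v} \<in> E"
    using assms unfolding graph_aut_def by auto
  have "{inv_into V g u, inv_into V g v} \<in> E \<longleftrightarrow> {u, v} \<in> E" if "u \<in> V" "v \<in> V" for u v
    using adj[of "inv_into V g u" "inv_into V g v"] that bij
    by (simp add: bij_betw_def bij_betw_inv_into_right inv_into_into)
  then show ?thesis
    using bij_betw_inv_into[OF bij] unfolding graph_aut_def by auto
qed

lemma degree_set_graph_aut:
  assumes "graph_aut V E g" and "x \<in> V"
  shows "degree_set V E (g x) = g ` degree_set V E x"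
proof -
  have bij: "bij_betw g V V" and adj: "\<And>u v. u \<in> V \<Longrightarrow> v \<in> V \<Longrightarrow> {u, v} \<in> E \<longleftrightarrow> {g u, g v} \<in> E"
    using assms(1) unfolding graph_aut_def by auto
  have "degree_set V E (g x) = g ` {w \<in> V. {g x, g w} \<in> E}"
    using bij unfolding degree_set_def bij_betw_def by auto
  also have "\<dots> = g ` degree_set V E x"
    using adj assms(2) unfolding degree_set_def by auto
  finally show ?thesis .
qed

lemma graph_aut_moved_image:
  assumes "graph_aut V E g" and "x \<in> V" and "g x \<noteq> x"
  shows "g (g x) \<noteq> g x"
  using assms graph_aut_in_V unfolding graph_aut_def bij_betw_def by (metis inj_onD)

section \<open>Components of induced subgraphs\<close>

lemma component_subset:
  assumes "is_component E S C"
  shows "C \<subseteq> S"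
proof
  fix x assume "x \<in> C"
  then obtain u where "(induced_adj E S)\<^sup>*\<^sup>* u x" and "u \<in> S"
    using assms unfolding is_component_def by auto
  then show "x \<in> S"
    by (induction rule: rtranclp_induct) (auto simp: induced_adj_def)
qed

lemma component_nonempty: "is_component E S C \<Longrightarrow> C \<noteq> {}"
  unfolding is_component_def by auto

lemma component_closed:
  assumes comp: "is_component E S C" and "c \<in> C" and "w \<in> S" and "{c, w} \<in> E"
  shows "w \<in> C"
proof -
  obtain u where C: "C = {x. (induced_adj E S)\<^sup>*\<^sup>* u x}"
    using comp unfolding is_component_def by auto
  have "induced_adj E S c w"
    using assms component_subset[OF comp] unfolding induced_adj_def by auto
  with \<open>c \<in> C\<close> show ?thesis
    unfolding C by (simp add: rtranclp.rtrancl_into_rtrancl)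
qed

lemma induced_adj_rtranclp_sym:
  "(induced_adj E S)\<^sup>*\<^sup>* x y \<Longrightarrow> (induced_adj E S)\<^sup>*\<^sup>* y x"
proof -
  have "symp (induced_adj E S)"
    unfolding symp_def induced_adj_def by (simp add: insert_commute)
  then show "(induced_adj E S)\<^sup>*\<^sup>* x y \<Longrightarrow> (induced_adj E S)\<^sup>*\<^sup>* y x"
    by (rule sympD[OF symp_rtranclp])
qed

lemma component_image_subset_or_disjoint:
  assumes comp: "is_component E S C"
    and adj: "\<And>x y. induced_adj E S x y \<Longrightarrow> induced_adj E S (f x) (f y)"
  shows "f ` C \<subseteq> C \<or> f ` C \<inter> C = {}"
proof -
  obtain u where C: "C = {w. (induced_adj E S)\<^sup>*\<^sup>* u w}"
    using comp unfolding is_component_def by auto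
  have "u \<in> C" using C by simp
  have image_path: "(induced_adj E S)\<^sup>*\<^sup>* (f u) (f c)" if "c \<in> C" for c
  proof -
    have "(induced_adj E S)\<^sup>*\<^sup>* u c" using that C by simp
    then show ?thesis
      by induction (simp_all add: adj rtranclp.rtrancl_into_rtrancl)
  qed
  show ?thesis
  proof (cases "f u \<in> C")
    case True
    have "f c \<in> C" if "c \<in> C" for c
    proof -
      have "(induced_adj E S)\<^sup>*\<^sup>* u (f u)" using True C by simp
      then have "(induced_adj E S)\<^sup>*\<^sup>* u (f c)" using image_path[OF that] by (rule rtranclp_trans)
      then show ?thesis using C by simp
    qed
    then show ?thesis by blast
  next
    case False
    have "f c \<notin> C" if "c \<in> C" for c
    proof
      assume "f c \<in> C"
      then have "(induced_adj E S)\<^sup>*\<^sup>* u (f c)" using C by simp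
      moreover have "(induced_adj E S)\<^sup>*\<^sup>* (f c) (f u)"
        using image_path[OF that] by (rule induced_adj_rtranclp_sym)
      ultimately have "f u \<in> C" using C by (simp add: rtranclp_trans)
      with False show False by contradiction
    qed
    then show ?thesis by blast
  qed
qed

section \<open>Transplanting an automorphism onto a block\<close>

definition local_aut :: "('a \<Rightarrow> 'a) \<Rightarrow> ('a \<Rightarrow> 'a) \<Rightarrow> 'a set \<Rightarrow> 'a \<Rightarrow> 'a" where
  "local_aut g h C x = (if x \<in> C then g x else if x \<in> g ` C then h x else x)"

text \<open>
  Since \<open>g\<close> fixes the boundary of \<open>C\<close>, on every edge \<open>local_aut g h C\<close> agrees with one of
  \<open>g\<close>, \<open>h\<close> and the identity; its inverse is \<open>local_aut h g (g ` C)\<close>, the same construction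
  for the block \<open>g ` C\<close> of \<open>h\<close>.
\<close>
locale aut_block =
  fixes V :: "'a set" and E :: "'a set set" and g h :: "'a \<Rightarrow> 'a" and C :: "'a set"
  assumes aut_g: "graph_aut V E g" and aut_h: "graph_aut V E h"
    and h_g: "\<And>x. x \<in> V \<Longrightarrow> h (g x) = x" and g_h: "\<And>x. x \<in> V \<Longrightarrow> g (h x) = x"
    and C_subset: "C \<subseteq> V"
    and moves: "\<And>c. c \<in> C \<Longrightarrow> g c \<noteq> c"
    and fixes_boundary: "\<And>c w. c \<in> C \<Longrightarrow> w \<in> V - C \<Longrightarrow> {c, w} \<in> E \<Longrightarrow> g w = w"
    and image_cases: "g ` C = C \<or> g ` C \<inter> C = {}"
begin

lemma h_image: "h ` g ` C = C"
  using C_subset h_g by (force simp: image_comp)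

lemma no_edge_to_image:
  assumes "c \<in> C" and "y \<in> g ` C - C"
  shows "{c, y} \<notin> E"
proof
  assume "{c, y} \<in> E"
  obtain c' where c': "c' \<in> C" "y = g c'" using assms(2) by auto
  then have "y \<in> V" using C_subset graph_aut_in_V[OF aut_g] by auto
  with \<open>{c, y} \<in> E\<close> assms have "g y = y" using fixes_boundary by blast
  with c' show False
    using graph_aut_moved_image[OF aut_g] moves C_subset by blast
qed

lemma inverse_block: "aut_block V E h g (g ` C)"
proof
  show "g ` C \<subseteq> V" using C_subset graph_aut_in_V[OF aut_g] by auto
  show "h d \<noteq> d" if "d \<in> g ` C" for d
    using that moves h_g C_subset by (auto, metis subsetD)
  show "h w = w" if "d \<in> g ` C" and w: "w \<in> V - g ` C" and "{d, w} \<in> E" for d w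
  proof -
    obtain c where c: "c \<in> C" "d = g c" using \<open>d \<in> g ` C\<close> by auto
    have hw: "h w \<in> V" "g (h w) = w" using w graph_aut_in_V[OF aut_h] g_h by auto
    then have "{c, h w} \<in> E" using graph_aut_adj[OF aut_g, of c "h w"] c \<open>{d, w} \<in> E\<close> C_subset by auto
    moreover have "h w \<notin> C" using hw w by force
    ultimately have "g (h w) = h w" using fixes_boundary c hw by blast
    then show "h w = w" using hw by simp
  qed
  show "h ` g ` C = g ` C \<or> h ` g ` C \<inter> g ` C = {}"
    using image_cases h_image by auto
qed (use aut_g aut_h h_g g_h in auto)

lemma local_aut_in_V: "x \<in> V \<Longrightarrow> local_aut g h C x \<in> V"
  using graph_aut_in_V[OF aut_g] graph_aut_in_V[OF aut_h] C_subset
  unfolding local_aut_def by auto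

lemma local_aut_fixes_outside: "x \<notin> C \<union> g ` C \<Longrightarrow> local_aut g h C x = x"
  unfolding local_aut_def by auto

lemma local_aut_outside: "x \<notin> C \<Longrightarrow> local_aut g h C x = local_aut h g (g ` C) x"
  unfolding local_aut_def using h_image by auto

lemma local_aut_neighbor:
  assumes "c \<in> C" and "y \<in> V" and "{c, y} \<in> E"
  shows "local_aut g h C y = g y"
proof -
  consider "y \<in> C" | "y \<in> g ` C - C" | "y \<notin> C \<union> g ` C" by blast
  then show ?thesis
  proof cases
    case 1
    then show ?thesis by (simp add: local_aut_def)
  next
    case 2
    then show ?thesis using no_edge_to_image assms by blast
  next
    case 3
    then have "g y = y" using fixes_boundary assms by blast
    with 3 show ?thesis by (simp add: local_aut_def)
  qed
qed

lemma local_aut_edge_at_block: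
  assumes "c \<in> C" and "y \<in> V" and "{c, y} \<in> E"
  shows "{local_aut g h C c, local_aut g h C y} \<in> E"
proof -
  have "local_aut g h C c = g c" using assms(1) by (simp add: local_aut_def)
  moreover have "local_aut g h C y = g y" using assms by (rule local_aut_neighbor)
  ultimately show ?thesis using assms graph_aut_adj[OF aut_g] C_subset by auto
qed

lemma local_aut_edge:
  assumes "x \<in> V" and "y \<in> V" and "{x, y} \<in> E"
  shows "{local_aut g h C x, local_aut g h C y} \<in> E"
proof -
  interpret inv: aut_block V E h g "g ` C" by (rule inverse_block)
  have yx: "{y, x} \<in> E" using assms(3) by (simp add: insert_commute)
  consider "x \<in> C" | "y \<in> C" | "x \<notin> C" "y \<notin> C" "x \<in> g ` C"
    | "x \<notin> C" "y \<notin> C" "y \<in> g ` C" | "x \<notin> C \<union> g ` C" "y \<notin> C \<union> g ` C"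
    by blast
  then show ?thesis
  proof cases
    case 1
    then show ?thesis using local_aut_edge_at_block assms(2,3) by blast
  next
    case 2
    then show ?thesis using local_aut_edge_at_block[OF _ assms(1) yx] by (simp add: insert_commute)
  next
    case 3
    then show ?thesis using inv.local_aut_edge_at_block[OF _ assms(2,3)] by (simp add: local_aut_outside)
  next
    case 4
    then show ?thesis
      using inv.local_aut_edge_at_block[OF _ assms(1) yx] by (simp add: local_aut_outside insert_commute)
  next
    case 5
    then show ?thesis using assms(3) by (simp add: local_aut_fixes_outside)
  qed
qed

lemma local_aut_left_inverse:
  assumes "x \<in> V"
  shows "local_aut h g (g ` C) (local_aut g h C x) = x"
proof (cases "x \<in> C")
  case True
  then show ?thesis using h_g C_subset by (auto simp: local_aut_def)
next
  case False
  have "local_aut h g (g ` C) (local_aut h g (g ` C) x) = x"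
  proof (cases "x \<in> g ` C")
    case True
    then obtain c where c: "c \<in> C" "x = g c" by auto
    with \<open>x \<notin> C\<close> have "c \<notin> g ` C" using image_cases by auto
    then show ?thesis
      using c True h_g C_subset by (auto simp: local_aut_def h_image)
  next
    case False
    then show ?thesis using \<open>x \<notin> C\<close> h_image by (auto simp: local_aut_def)
  qed
  with False show ?thesis by (simp add: local_aut_outside)
qed

theorem graph_aut_local_aut: "graph_aut V E (local_aut g h C)"
proof -
  interpret inv: aut_block V E h g "g ` C" by (rule inverse_block)
  let ?t = "local_aut g h C" and ?t' = "local_aut h g (g ` C)"
  have right_inverse: "?t (?t' x) = x" if "x \<in> V" for x
    using inv.local_aut_left_inverse[OF that] by (simp add: h_image)
  have "bij_betw ?t V V"
  proof (rule bij_betw_imageI)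
    show "inj_on ?t V" by (rule inj_on_inverseI[where g = ?t']) (rule local_aut_left_inverse)
    have "x \<in> ?t ` V" if "x \<in> V" for x
      using right_inverse[OF that] inv.local_aut_in_V[OF that] by (metis image_eqI)
    then show "?t ` V = V" using local_aut_in_V by auto
  qed
  moreover have "{u, v} \<in> E \<longleftrightarrow> {?t u, ?t v} \<in> E" if "u \<in> V" "v \<in> V" for u v
    using local_aut_edge inv.local_aut_edge[of "?t u" "?t v"] local_aut_left_inverse
      local_aut_in_V that by metis
  ultimately show ?thesis unfolding graph_aut_def by blast
qed

end

lemma finite_moved_edges:
  assumes "simple_graph V E" and "finite S"
    and fixed: "\<And>x. x \<notin> S \<Longrightarrow> f x = x"
    and "\<And>x. x \<in> S \<Longrightarrow> finite (degree_set V E x)"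
  shows "finite (moved_edges E f)"
proof -
  have "moved_edges E f \<subseteq> (\<Union>x\<in>S. (\<lambda>w. {x, w}) ` degree_set V E x)"
  proof
    fix e assume "e \<in> moved_edges E f"
    then have "e \<in> E" and "f ` e \<noteq> e" unfolding moved_edges_def by auto
    then obtain x where "x \<in> e" "f x \<noteq> x" by force
    then have "x \<in> S" using fixed by blast
    have "e \<subseteq> V" "card e = 2" using \<open>e \<in> E\<close> assms(1) unfolding simple_graph_def by auto
    then obtain a b where "e = {a, b}" by (meson card_2_iff)
    with \<open>x \<in> e\<close> obtain w where "e = {x, w}" by blast
    with \<open>e \<in> E\<close> \<open>e \<subseteq> V\<close> have "w \<in> degree_set V E x" unfolding degree_set_def by simp
    with \<open>e = {x, w}\<close> \<open>x \<in> S\<close> show "e \<in> (\<Union>x\<in>S. (\<lambda>w. {x, w}) ` degree_set V E x)" by blast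
  qed
  moreover have "finite (\<Union>x\<in>S. (\<lambda>w. {x, w}) ` degree_set V E x)"
    using assms(2,4) by simp
  ultimately show ?thesis by (rule finite_subset)
qed

lemma moved_component_aut_block:
  assumes aut: "graph_aut V E g" and comp: "is_component E {v \<in> V. g v \<noteq> v} C"
    and "finite C"
  shows "aut_block V E g (inv_into V g) C"
proof
  let ?M = "{v \<in> V. g v \<noteq> v}"
  have bij: "bij_betw g V V" using aut unfolding graph_aut_def by blast
  show "graph_aut V E g" by (rule aut)
  show "graph_aut V E (inv_into V g)" using aut by (rule graph_aut_inv_into)
  show "\<And>x. x \<in> V \<Longrightarrow> inv_into V g (g x) = x" "\<And>x. x \<in> V \<Longrightarrow> g (inv_into V g x) = x"
    using bij by (auto simp: bij_betw_def f_inv_into_f)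
  show "C \<subseteq> V" and "\<And>c. c \<in> C \<Longrightarrow> g c \<noteq> c"
    using component_subset[OF comp] by auto
  show "g w = w" if "c \<in> C" "w \<in> V - C" "{c, w} \<in> E" for c w
    using component_closed[OF comp] that by blast
  have moved_g: "g x \<in> ?M" if "x \<in> ?M" for x
    using that graph_aut_moved_image[OF aut] graph_aut_in_V[OF aut] by blast
  have "induced_adj E ?M (g x) (g y)" if "induced_adj E ?M x y" for x y
    using that moved_g graph_aut_adj[OF aut, of x y] unfolding induced_adj_def by blast
  then have "g ` C \<subseteq> C \<or> g ` C \<inter> C = {}"
    by (rule component_image_subset_or_disjoint[OF comp])
  moreover have "inj_on g C"
    using bij component_subset[OF comp] by (auto simp: bij_betw_def intro: inj_on_subset)
  ultimately show "g ` C = C \<or> g ` C \<inter> C = {}"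
    using endo_inj_surj[OF \<open>finite C\<close>] by blast
qed

theorem mainTheorem1:
  fixes V :: "'a set" and E :: "'a set set" and g :: "'a \<Rightarrow> 'a" and C :: "'a set"
  assumes "simple_graph V E"
    and "infinite_edge_motion V E"
    and "graph_aut V E g"
    and "is_component E {v \<in> V. g v \<noteq> v} C"
    and "finite C"
  shows "\<exists>v\<in>C. infinite (degree_set V E v)"
proof (rule ccontr)
  assume "\<not> ?thesis"
  then have finite_deg: "finite (degree_set V E c)" if "c \<in> C" for c
    using that by blast
  interpret aut_block V E g "inv_into V g" C
    using assms(3-5) by (rule moved_component_aut_block)
  let ?t = "local_aut g (inv_into V g) C"
  obtain c where "c \<in> C" using component_nonempty[OF assms(4)] by blast
  then have "c \<in> V" and "?t c \<noteq> c" using moves C_subset by (auto simp: local_aut_def)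
  with assms(2) graph_aut_local_aut have "infinite (moved_edges E ?t)"
    by (rule infinite_edge_motionD)
  moreover have "finite (degree_set V E x)" if "x \<in> C \<union> g ` C" for x
    using that finite_deg degree_set_graph_aut[OF assms(3)] C_subset by auto
  with assms(5) have "finite (moved_edges E ?t)"
    by (intro finite_moved_edges[OF assms(1), where S = "C \<union> g ` C"] local_aut_fixes_outside) auto
  ultimately show False by contradiction
qed

end
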